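(* Let $G=(V,E)$ be a connected locally finite graph with measure $\mu$ and edge weights $w$ as described in the context, and let $m\ge1$ be an integer. Suppose there are positive constants $\mu_0,\mu_1,w_0$ such that $\mu_0\le\mu(x)\le\mu_1$ for all $x\in V$ and $w_{xy}\ge w_0$ for all $xy\in E$. Then there exists a constant $C$ depending only on $\mu_0,\mu_1,w_0$ and $m$ such that for every $u\in W_0^{m,1}(V)$ and every integer $j\in[0,m/2]$, $$\|\Delta^ju\|_\infty\le C\int_V|\nabla\Delta^ju|\,d\mu.$$
   Context: $G=(V,E)$ is a connected graph with infinitely many vertices in which every vertex has finitely many neighbours; $y\sim x$ means $xy\in E$. A measure $\mu:V\to(0,+\infty)$ is given, and each edge $xy\in E$ carries a weight $w_{xy}>0$. For $u:V\to\mathbb{R}$ define $\Delta u(x)=\frac{1}{\mu(x)}\sum_{y\sim x}w_{xy}(u(y)-u(x))$ and $|\nabla u|(x)=\big(\frac{1}{2\mu(x)}\sum_{y\sim x}w_{xy}(u(y)-u(x))^2\big)^{1/2}$. Integrals are $\int_V f\,d\mu=\sum_{x\in V}\mu(x)f(x)$; $\|f\|_1=\int_V|f|d\mu$ and $\|f\|_\infty=\sup_{x\in V}|f(x)|$. Set $\Delta^0u=u$, $\Delta^ku=\Delta(\Delta^{k-1}u)$, $|\nabla\Delta^ku|=|\nabla(\Delta^ku)|$, and $|\nabla^j u|=|\Delta^k u|$ if $j=2k$, $|\nabla^ju|=|\nabla(\Delta^ku)|$ if $j=2k+1$. $W^{m,1}(V)$ is the space of $u$ with norm $\|u\|_{W^{m,1}(V)}=\sum_{j=0}^m\||\nabla^ju|\|_1<\infty$;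 $C_c(V)$ is the set of finitely supported functions on $V$, and $W_0^{m,1}(V)$ is the completion of $C_c(V)$ under $\|\cdot\|_{W^{m,1}(V)}$. *)

theory Defs
  imports "HOL-Analysis.Analysis" "HOL-Library.Extended_Nonnegative_Real"
begin

text \<open>Vertex set = UNIV of the type 'a. Edge relation E (y \<sim> x iff E x y),
  measure mu, edge weights w.\<close>

definition graph_lap ::
  "('a \<Rightarrow> real) \<Rightarrow> ('a \<Rightarrow> 'a \<Rightarrow> real) \<Rightarrow> ('a \<Rightarrow> 'a \<Rightarrow> bool) \<Rightarrow> ('a \<Rightarrow> real) \<Rightarrow> 'a \<Rightarrow> real" where
  "graph_lap mu w E u x = (1 / mu x) * (\<Sum>y\<in>{y. E x y}. w x y * (u y - u x))"

definition graph_grad ::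
  "('a \<Rightarrow> real) \<Rightarrow> ('a \<Rightarrow> 'a \<Rightarrow> real) \<Rightarrow> ('a \<Rightarrow> 'a \<Rightarrow> bool) \<Rightarrow> ('a \<Rightarrow> real) \<Rightarrow> 'a \<Rightarrow> real" where
  "graph_grad mu w E u x = sqrt (1 / (2 * mu x) * (\<Sum>y\<in>{y. E x y}. w x y * (u y - u x)\<^sup>2))"

definition graph_lap_pow ::
  "('a \<Rightarrow> real) \<Rightarrow> ('a \<Rightarrow> 'a \<Rightarrow> real) \<Rightarrow> ('a \<Rightarrow> 'a \<Rightarrow> bool) \<Rightarrow> nat \<Rightarrow> ('a \<Rightarrow> real) \<Rightarrow> 'a \<Rightarrow> real" where
  "graph_lap_pow mu w E k u = (graph_lap mu w E ^^ k) u"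

definition graph_nabla_j ::
  "('a \<Rightarrow> real) \<Rightarrow> ('a \<Rightarrow> 'a \<Rightarrow> real) \<Rightarrow> ('a \<Rightarrow> 'a \<Rightarrow> bool) \<Rightarrow> nat \<Rightarrow> ('a \<Rightarrow> real) \<Rightarrow> 'a \<Rightarrow> real" where
  "graph_nabla_j mu w E j u =
     (if even j then (\<lambda>x. \<bar>graph_lap_pow mu w E (j div 2) u x\<bar>)
      else graph_grad mu w E (graph_lap_pow mu w E (j div 2) u))"

definition l1_norm :: "('a \<Rightarrow> real) \<Rightarrow> ('a \<Rightarrow> real) \<Rightarrow> ennreal" where
  "l1_norm mu f = (\<Sum>\<^sub>\<infinity>x. ennreal (mu x * \<bar>f x\<bar>))"

definition sobolev_norm ::
  "('a \<Rightarrow> real) \<Rightarrow> ('a \<Rightarrow> 'a \<Rightarrow> real) \<Rightarrow> ('a \<Rightarrow> 'a \<Rightarrow> bool) \<Rightarrow> nat \<Rightarrow> ('a \<Rightarrow> real) \<Rightarrow> ennreal" where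
  "sobolev_norm mu w E m u = (\<Sum>j\<le>m. l1_norm mu (graph_nabla_j mu w E j u))"

text \<open>W_0^{m,1}(V): closure of finitely supported functions in the W^{m,1} norm
  (the completion identified with the corresponding space of functions on V).\<close>
definition W0 ::
  "('a \<Rightarrow> real) \<Rightarrow> ('a \<Rightarrow> 'a \<Rightarrow> real) \<Rightarrow> ('a \<Rightarrow> 'a \<Rightarrow> bool) \<Rightarrow> nat \<Rightarrow> ('a \<Rightarrow> real) set" where
  "W0 mu w E m = {u. \<exists>\<phi> :: nat \<Rightarrow> 'a \<Rightarrow> real.
       (\<forall>k. finite {x. \<phi> k x \<noteq> 0}) \<and>
       ((\<lambda>k. sobolev_norm mu w E m (\<lambda>x. \<phi> k x - u x)) \<longlongrightarrow> 0) sequentially}"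

end

theory Submission
  imports Defs
begin

text \<open>Along a shortest path from \<open>x\<close> to \<open>z\<close> each vertex \<open>p\<close> is visited once, and every edge
  \<open>pq\<close> satisfies \<open>|f q - f p| \<le> sqrt (2 \<mu>(p) / w\<^sub>p\<^sub>q) |\<nabla>f|(p) \<le> C \<mu>(p) |\<nabla>f|(p)\<close> with
  \<open>C = sqrt (2 \<mu>1 / w0) / \<mu>0\<close>; summing gives
  \<open>|f x - f z| \<le> C \<parallel>|\<nabla>f|\<parallel>\<^sub>1\<close> for every function \<open>f\<close> on a connected graph.
  Applied to \<open>f = \<Delta>\<^sup>j u\<close>, it remains to find vertices \<open>z\<close> where \<open>|\<Delta>\<^sup>j u z|\<close> is arbitrarily small:
  \<open>\<Delta>\<^sup>j u\<close> has finite \<open>\<ell>\<^sup>1\<close>-distance from the finitely supported \<open>\<Delta>\<^sup>j \<phi>\<close>, which is impossible if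
  \<open>|\<Delta>\<^sup>j u| \<ge> e > 0\<close> on the infinite set where \<open>\<Delta>\<^sup>j \<phi>\<close> vanishes, since \<open>\<mu> \<ge> \<mu>0\<close>.\<close>

lemma infsum_ennreal_mono_set:
  fixes f :: "'a \<Rightarrow> ennreal"
  assumes "A \<subseteq> B"
  shows "infsum f A \<le> infsum f B"
  by (rule infsum_mono_neutral) (use assms in \<open>auto simp: nonneg_summable_on_complete\<close>)

lemma graph_lap_diff:
  "graph_lap mu w E (\<lambda>x. f x - g x) = (\<lambda>x. graph_lap mu w E f x - graph_lap mu w E g x)"
proof
  fix x
  have "(\<Sum>y\<in>{y. E x y}. w x y * ((f y - g y) - (f x - g x)))
      = (\<Sum>y\<in>{y. E x y}. w x y * (f y - f x)) - (\<Sum>y\<in>{y. E x y}. w x y * (g y - g x))"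
    unfolding sum_subtractf[symmetric] by (simp add: algebra_simps)
  then show "graph_lap mu w E (\<lambda>x. f x - g x) x = graph_lap mu w E f x - graph_lap mu w E g x"
    unfolding graph_lap_def by (simp add: right_diff_distrib)
qed

lemma graph_lap_pow_diff:
  "graph_lap_pow mu w E k (\<lambda>x. f x - g x)
     = (\<lambda>x. graph_lap_pow mu w E k f x - graph_lap_pow mu w E k g x)"
  unfolding graph_lap_pow_def by (induction k) (simp_all add: graph_lap_diff)

lemma finite_support_graph_lap:
  assumes sym: "\<forall>x y. E x y \<longrightarrow> E y x" and locfin: "\<forall>x. finite {y. E x y}"
    and fin: "finite {x. f x \<noteq> 0}"
  shows "finite {x. graph_lap mu w E f x \<noteq> 0}"
proof (rule finite_subset)
  let ?S = "{x. f x \<noteq> 0}"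
  show "{x. graph_lap mu w E f x \<noteq> 0} \<subseteq> ?S \<union> (\<Union>y\<in>?S. {x. E y x})"
  proof (rule subsetI, rule ccontr)
    fix x assume "x \<in> {x. graph_lap mu w E f x \<noteq> 0}" and "x \<notin> ?S \<union> (\<Union>y\<in>?S. {x. E y x})"
    moreover from this have "(\<Sum>y\<in>{y. E x y}. w x y * (f y - f x)) = 0"
      using sym by (intro sum.neutral) auto
    ultimately show False unfolding graph_lap_def by simp
  qed
  show "finite (?S \<union> (\<Union>y\<in>?S. {x. E y x}))" using fin locfin by auto
qed

lemma finite_support_graph_lap_pow:
  assumes "\<forall>x y. E x y \<longrightarrow> E y x" and "\<forall>x. finite {y. E x y}" and "finite {x. f x \<noteq> 0}"
  shows "finite {x. graph_lap_pow mu w E k f x \<noteq> 0}"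
  unfolding graph_lap_pow_def
  by (induction k) (use assms finite_support_graph_lap in auto)

lemma W0_graph_lap_pow_near_finite_support:
  assumes sym: "\<forall>x y. E x y \<longrightarrow> E y x" and locfin: "\<forall>x. finite {y. E x y}"
    and u: "u \<in> W0 mu w E m" and j: "2 * j \<le> m"
  obtains \<psi> where "finite {x. \<psi> x \<noteq> 0}"
    and "l1_norm mu (\<lambda>x. \<psi> x - graph_lap_pow mu w E j u x) < \<infinity>"
proof -
  from u obtain \<phi> :: "nat \<Rightarrow> 'a \<Rightarrow> real" where fin: "\<forall>k. finite {x. \<phi> k x \<noteq> 0}"
    and lim: "((\<lambda>k. sobolev_norm mu w E m (\<lambda>x. \<phi> k x - u x)) \<longlongrightarrow> 0) sequentially"
    unfolding W0_def by blast
  obtain k where k: "sobolev_norm mu w E m (\<lambda>x. \<phi> k x - u x) < \<infinity>"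
    using eventually_happens'[OF _ order_tendstoD(2)[OF lim]] by force
  let ?\<psi> = "graph_lap_pow mu w E j (\<phi> k)"
  have "l1_norm mu (graph_nabla_j mu w E (2 * j) (\<lambda>x. \<phi> k x - u x))
      \<le> sobolev_norm mu w E m (\<lambda>x. \<phi> k x - u x)"
    unfolding sobolev_norm_def by (rule member_le_sum) (use j in auto)
  moreover have "l1_norm mu (graph_nabla_j mu w E (2 * j) (\<lambda>x. \<phi> k x - u x))
      = l1_norm mu (\<lambda>x. ?\<psi> x - graph_lap_pow mu w E j u x)"
    unfolding graph_nabla_j_def l1_norm_def by (simp add: graph_lap_pow_diff)
  moreover have "finite {x. ?\<psi> x \<noteq> 0}"
    using finite_support_graph_lap_pow[OF sym locfin] fin by blast
  ultimately show thesis using k that by auto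
qed

lemma ex_small_value_if_l1_near_finite_support:
  fixes v \<psi> :: "'a \<Rightarrow> real"
  assumes "infinite (UNIV :: 'a set)" and "\<mu>0 > 0" and mub: "\<forall>x. \<mu>0 \<le> mu x"
    and fin: "finite {x. \<psi> x \<noteq> 0}" and near: "l1_norm mu (\<lambda>x. \<psi> x - v x) < \<infinity>"
    and "e > 0"
  shows "\<exists>z. \<bar>v z\<bar> < e"
proof (rule ccontr)
  assume "\<not> ?thesis"
  then have big: "e \<le> \<bar>v z\<bar>" for z by (simp add: not_less)
  let ?g = "\<lambda>x. ennreal (mu x * \<bar>\<psi> x - v x\<bar>)"
  have "infsum ?g (- {x. \<psi> x \<noteq> 0}) = \<infinity>"
  proof (rule infsum_superconst_infinite_ennreal[where b = "ennreal (\<mu>0 * e)"])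
    show "ennreal (\<mu>0 * e) \<le> ?g x" if "x \<in> - {x. \<psi> x \<noteq> 0}" for x
      using that assms(2,6) big[of x] mub[rule_format, of x] by (intro ennreal_leI mult_mono) auto
    show "infinite (- {x. \<psi> x \<noteq> 0})"
      using assms by (metis Compl_partition2 finite_UnI)
  qed (use assms in auto)
  moreover have "infsum ?g (- {x. \<psi> x \<noteq> 0}) \<le> l1_norm mu (\<lambda>x. \<psi> x - v x)"
    unfolding l1_norm_def by (rule infsum_ennreal_mono_set) simp
  ultimately show False using near by (simp add: top_unique)
qed

lemma graph_grad_nonneg:
  "mu x > 0 \<Longrightarrow> \<forall>y. E x y \<longrightarrow> w x y \<ge> 0 \<Longrightarrow> graph_grad mu w E f x \<ge> 0"
  unfolding graph_grad_def by (intro real_sqrt_ge_zero mult_nonneg_nonneg sum_nonneg) auto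

lemma abs_diff_le_graph_grad:
  assumes "E p q" and "finite {y. E p y}" and "\<forall>y. E p y \<longrightarrow> w p y \<ge> 0"
    and "w p q > 0" and "mu p > 0"
  shows "\<bar>f q - f p\<bar> \<le> sqrt (2 * mu p / w p q) * graph_grad mu w E f p"
proof -
  let ?s = "\<Sum>y\<in>{y. E p y}. w p y * (f y - f p)\<^sup>2"
  have "w p q * (f q - f p)\<^sup>2 \<le> ?s"
    by (rule member_le_sum) (use assms in auto)
  then have "(f q - f p)\<^sup>2 \<le> (2 * mu p / w p q) * (1 / (2 * mu p) * ?s)"
    using assms by (simp add: field_simps)
  then have "sqrt ((f q - f p)\<^sup>2) \<le> sqrt ((2 * mu p / w p q) * (1 / (2 * mu p) * ?s))"
    by (rule real_sqrt_le_mono)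
  then show ?thesis unfolding graph_grad_def real_sqrt_mult by simp
qed

text \<open>Minimality of \<open>n\<close> keeps the path simple, so no vertex is counted twice.\<close>

lemma abs_diff_le_sum_along_shortest_path:
  fixes f D :: "'a \<Rightarrow> real"
  assumes edge: "\<And>p q. E p q \<Longrightarrow> \<bar>f q - f p\<bar> \<le> D p"
  shows "(E ^^ n) a b \<Longrightarrow> \<forall>k<n. \<not> (E ^^ k) a b \<Longrightarrow>
    \<exists>F. finite F \<and> F \<subseteq> {y. \<exists>k<n. (E ^^ k) a y} \<and> \<bar>f a - f b\<bar> \<le> sum D F"
proof (induction n arbitrary: b)
  case 0
  then show ?case by (intro exI[of _ "{}"]) simp
next
  case (Suc n)
  from Suc.prems(1) obtain b' where b': "(E ^^ n) a b'" "E b' b" by (rule relpowp_Suc_E)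
  have shortest: "\<forall>k<n. \<not> (E ^^ k) a b'"
    using Suc.prems(2) b'(2) relpowp_Suc_I by (metis Suc_mono)
  from Suc.IH[OF b'(1) shortest] obtain F where F: "finite F"
    "F \<subseteq> {y. \<exists>k<n. (E ^^ k) a y}" "\<bar>f a - f b'\<bar> \<le> sum D F" by blast
  have "b' \<notin> F" using F(2) shortest by blast
  then have "\<bar>f a - f b\<bar> \<le> sum D (insert b' F)"
    using F edge[OF b'(2)] by simp
  moreover have "insert b' F \<subseteq> {y. \<exists>k<Suc n. (E ^^ k) a y}"
    using F(2) b'(1) less_Suc_eq by auto
  ultimately show ?case using F(1) by blast
qed

lemma abs_diff_le_finite_sum_if_rtranclp:
  fixes f D :: "'a \<Rightarrow> real"
  assumes "\<And>p q. E p q \<Longrightarrow> \<bar>f q - f p\<bar> \<le> D p" and "E\<^sup>*\<^sup>* a b"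
  obtains F where "finite F" and "\<bar>f a - f b\<bar> \<le> sum D F"
proof -
  obtain n where "(E ^^ n) a b" and "\<forall>k<n. \<not> (E ^^ k) a b"
    using exists_least_iff[THEN iffD1, OF rtranclp_imp_relpowp[OF assms(2)]] by blast
  then show thesis
    using abs_diff_le_sum_along_shortest_path[of E f D, OF assms(1)] that by blast
qed

lemma abs_diff_le_scaled_graph_grad:
  assumes "E p q" and "finite {y. E p y}" and "\<mu>0 > 0" and "w0 > 0"
    and wb: "\<forall>y. E p y \<longrightarrow> w p y \<ge> w0" and "\<mu>0 \<le> mu p" and "mu p \<le> \<mu>1"
  shows "\<bar>f q - f p\<bar> \<le> sqrt (2 * \<mu>1 / w0) / \<mu>0 * (mu p * graph_grad mu w E f p)"
proof -
  let ?g = "graph_grad mu w E f p"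
  have wnonneg: "\<forall>y. E p y \<longrightarrow> w p y \<ge> 0" using wb assms(4) by force
  have wpq: "w0 \<le> w p q" using wb assms(1) by blast
  have g_nonneg: "?g \<ge> 0" by (rule graph_grad_nonneg) (use assms wnonneg in auto)
  have "\<bar>f q - f p\<bar> \<le> sqrt (2 * mu p / w p q) * ?g"
    by (rule abs_diff_le_graph_grad) (use assms wnonneg wpq in auto)
  also have "\<dots> \<le> sqrt (2 * \<mu>1 / w0) * ?g"
  proof -
    have "2 * mu p / w p q \<le> 2 * \<mu>1 / w0"
      by (rule frac_le) (use assms wpq in auto)
    then show ?thesis by (intro mult_right_mono real_sqrt_le_mono g_nonneg)
  qed
  also have "\<dots> \<le> sqrt (2 * \<mu>1 / w0) * (mu p / \<mu>0 * ?g)"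
  proof -
    have "1 \<le> mu p / \<mu>0" using assms by simp
    then have "?g \<le> mu p / \<mu>0 * ?g" using mult_right_mono[OF _ g_nonneg] by fastforce
    then show ?thesis using assms by (intro mult_left_mono) auto
  qed
  finally show ?thesis by simp
qed

lemma abs_diff_le_l1_norm_graph_grad:
  assumes "\<mu>0 > 0" and "w0 > 0"
    and locfin: "\<forall>x. finite {y. E x y}" and conn: "\<forall>x y. E\<^sup>*\<^sup>* x y"
    and wb: "\<forall>x y. E x y \<longrightarrow> w x y \<ge> w0" and mub: "\<forall>x. \<mu>0 \<le> mu x \<and> mu x \<le> \<mu>1"
  shows "ennreal \<bar>f x - f z\<bar>
    \<le> ennreal (sqrt (2 * \<mu>1 / w0) / \<mu>0) * l1_norm mu (graph_grad mu w E f)"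
proof -
  define C where "C = sqrt (2 * \<mu>1 / w0) / \<mu>0"
  let ?gr = "graph_grad mu w E f"
  have mu_pos: "mu p > 0" for p using mub assms(1) by (meson less_le_trans)
  have gr_nonneg: "?gr p \<ge> 0" for p
    by (rule graph_grad_nonneg) (use mu_pos wb assms(2) in force)+
  have "0 \<le> \<mu>1" using mub assms(1) by (meson less_le_trans order_trans less_imp_le)
  then have C_nonneg: "C \<ge> 0" unfolding C_def using assms(1,2) by simp
  have edge: "\<bar>f q - f p\<bar> \<le> C * (mu p * ?gr p)" if "E p q" for p q
    unfolding C_def
    by (rule abs_diff_le_scaled_graph_grad[where E = E and p = p and q = q and f = f and mu = mu])
      (use that locfin wb mub assms(1,2) in auto)
  obtain F where F: "finite F" "\<bar>f x - f z\<bar> \<le> (\<Sum>p\<in>F. C * (mu p * ?gr p))"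
    using abs_diff_le_finite_sum_if_rtranclp[of E f "\<lambda>p. C * (mu p * ?gr p)" x z] edge conn
    by blast
  have "ennreal \<bar>f x - f z\<bar> \<le> ennreal C * (\<Sum>p\<in>F. ennreal (mu p * \<bar>?gr p\<bar>))"
    using F(2) mu_pos gr_nonneg C_nonneg
    by (simp add: sum_distrib_left[symmetric] ennreal_mult[symmetric] sum_ennreal
        sum_nonneg less_imp_le ennreal_leI)
  also have "(\<Sum>p\<in>F. ennreal (mu p * \<bar>?gr p\<bar>)) \<le> l1_norm mu ?gr"
    unfolding l1_norm_def using infsum_ennreal_mono_set[of F UNIV] F(1) by simp
  finally show ?thesis unfolding C_def by (simp add: mult_left_mono)
qed

theorem theorem1p6:
  fixes \<mu>0 \<mu>1 w0 :: real and m :: nat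
  assumes "\<mu>0 > 0" and "\<mu>1 > 0" and "w0 > 0" and "m \<ge> 1"
  shows "\<exists>C::real. \<forall>(E :: 'a \<Rightarrow> 'a \<Rightarrow> bool) (mu :: 'a \<Rightarrow> real) (w :: 'a \<Rightarrow> 'a \<Rightarrow> real).
    infinite (UNIV :: 'a set) \<longrightarrow>
    (\<forall>x y. E x y \<longrightarrow> E y x) \<longrightarrow>
    (\<forall>x. finite {y. E x y}) \<longrightarrow>
    (\<forall>x y. E\<^sup>*\<^sup>* x y) \<longrightarrow>
    (\<forall>x y. w x y = w y x) \<longrightarrow>
    (\<forall>x y. E x y \<longrightarrow> w x y \<ge> w0) \<longrightarrow>
    (\<forall>x. \<mu>0 \<le> mu x \<and> mu x \<le> \<mu>1) \<longrightarrow>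
    (\<forall>u \<in> W0 mu w E m. \<forall>j::nat. 2 * j \<le> m \<longrightarrow>
       (\<forall>x. ennreal \<bar>graph_lap_pow mu w E j u x\<bar>
              \<le> ennreal C * l1_norm mu (graph_grad mu w E (graph_lap_pow mu w E j u))))"
proof (intro exI[of _ "sqrt (2 * \<mu>1 / w0) / \<mu>0"] allI impI ballI)
  fix E :: "'a \<Rightarrow> 'a \<Rightarrow> bool" and mu :: "'a \<Rightarrow> real" and w :: "'a \<Rightarrow> 'a \<Rightarrow> real" and u j x
  assume inf: "infinite (UNIV :: 'a set)" and sym: "\<forall>x y. E x y \<longrightarrow> E y x"
    and locfin: "\<forall>x. finite {y. E x y}" and conn: "\<forall>x y. E\<^sup>*\<^sup>* x y"
    and "\<forall>x y. w x y = w y x" and wb: "\<forall>x y. E x y \<longrightarrow> w x y \<ge> w0"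
    and mub: "\<forall>x. \<mu>0 \<le> mu x \<and> mu x \<le> \<mu>1" and u: "u \<in> W0 mu w E m" and j: "2 * j \<le> m"
  let ?v = "graph_lap_pow mu w E j u"
  let ?bound = "ennreal (sqrt (2 * \<mu>1 / w0) / \<mu>0) * l1_norm mu (graph_grad mu w E ?v)"
  show "ennreal \<bar>?v x\<bar> \<le> ?bound"
  proof (rule ennreal_le_epsilon)
    fix e :: real assume "e > 0"
    obtain \<psi> where "finite {x. \<psi> x \<noteq> 0}" and "l1_norm mu (\<lambda>x. \<psi> x - ?v x) < \<infinity>"
      using W0_graph_lap_pow_near_finite_support[OF sym locfin u j] .
    then obtain z where z: "\<bar>?v z\<bar> < e"
      using ex_small_value_if_l1_near_finite_support[OF inf assms(1) _ _ _ \<open>e > 0\<close>] mub by blast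
    have "ennreal \<bar>?v x\<bar> \<le> ennreal \<bar>?v x - ?v z\<bar> + ennreal \<bar>?v z\<bar>"
      by (simp add: ennreal_plus[symmetric] ennreal_leI del: ennreal_plus)
    also have "\<dots> \<le> ?bound + ennreal e"
      using abs_diff_le_l1_norm_graph_grad[OF assms(1,3) locfin conn wb mub] z
      by (intro add_mono ennreal_leI) auto
    finally show "ennreal \<bar>?v x\<bar> \<le> ?bound + ennreal e" .
  qed
qed

end
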